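(* Let $\mathcal Q_{round}$ be the set of product measures $\mathrm{Prod}(q)$ with $q\in[0,1]^{\mathbb N}$ such that for every $n\in\mathbb N$, $q_{2n-1}\in\{\tfrac13,\tfrac23\}$ and $q_{2n}=\mathbb 1[q_{2n-1}=\tfrac23]$. Then $\mathcal Q_{round}$ is UME-learnable.
   Context: $\mathrm{Prod}(q)$ is the product measure on $\{0,1\}^{\mathbb N}$ with independent coordinates $X_j\sim\mathrm{Bernoulli}(q_j)$; its mean vector $\mathrm{Mean}(\mathrm{Prod}(q))$ is $q$. A collection $\mathcal Q$ of probability measures on $\{0,1\}^{\mathbb N}$ is UME-learnable if there exist (measurable) estimators $\mathcal A_n:(\{0,1\}^{\mathbb N})^n\to[0,1]^{\mathbb N}$ such that for every $\mu\in\mathcal Q$, $\mathbb E_{S\sim\mu^n}\|\mathcal A_n(S)-\mathrm{Mean}(\mu)\|_\infty\to0$ as $n\to\infty$, where $S$ consists of $n$ i.i.d. draws from $\mu$ and $\mathrm{Mean}(\mu)_j=\mathbb E[X_j]$. *)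

theory Defs
  imports "HOL-Probability.Probability"
begin

text \<open>Points of {0,1}^N are functions nat => bool; coordinate j (0-based) corresponds
to the paper's coordinate j+1.\<close>

definition cube :: "(nat \<Rightarrow> bool) measure" where
  "cube = PiM UNIV (\<lambda>_. count_space UNIV)"

definition Prod :: "(nat \<Rightarrow> real) \<Rightarrow> (nat \<Rightarrow> bool) measure" where
  "Prod q = PiM UNIV (\<lambda>j. measure_pmf (bernoulli_pmf (q j)))"

definition Mean :: "(nat \<Rightarrow> bool) measure \<Rightarrow> nat \<Rightarrow> real" where
  "Mean \<mu> j = (LINT x|\<mu>. (if x j then 1 else 0))"

definition UME_learnable :: "(nat \<Rightarrow> bool) measure set \<Rightarrow> bool" where
  "UME_learnable Q \<longleftrightarrow>
     (\<exists>A :: nat \<Rightarrow> (nat \<Rightarrow> nat \<Rightarrow> bool) \<Rightarrow> nat \<Rightarrow> real.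
        (\<forall>n. A n \<in> measurable (PiM {..<n} (\<lambda>_. cube)) (PiM UNIV (\<lambda>_. borel))
              \<and> (\<forall>S j. A n S j \<in> {0..1})) \<and>
        (\<forall>\<mu>\<in>Q. ((\<lambda>n. \<integral>\<^sup>+ S. (SUP j. ennreal \<bar>A n S j - Mean \<mu> j\<bar>) \<partial>(PiM {..<n} (\<lambda>_. \<mu>)))
                 \<longlongrightarrow> 0) sequentially))"

definition Q_round :: "(nat \<Rightarrow> bool) measure set" where
  "Q_round = {Prod q | q. (\<forall>j. q j \<in> {0..1}) \<and>
      (\<forall>k. q (2*k) \<in> {1/3, 2/3} \<and> q (2*k+1) = (if q (2*k) = 2/3 then 1 else 0))}"

end

theory Submission
  imports Defs
begin

text \<open>The paper's even coordinates (here the odd ones, 2k+1) are deterministic bits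
recording whether the preceding coordinate has mean 1/3 or 2/3. Hence a single sample
reveals the whole mean vector almost surely, and reading it off the first sample gives
an estimator that is exact with probability one as soon as n > 0.\<close>

lemma UME_learnable_if_eventually_AE_exact:
  fixes A :: "nat \<Rightarrow> (nat \<Rightarrow> nat \<Rightarrow> bool) \<Rightarrow> nat \<Rightarrow> real"
  assumes "\<And>n. A n \<in> measurable (PiM {..<n} (\<lambda>_. cube)) (PiM UNIV (\<lambda>_. borel))"
    and "\<And>n S j. A n S j \<in> {0..1}"
    and exact: "\<And>\<mu>. \<mu> \<in> Q \<Longrightarrow>
      \<forall>\<^sub>F n in sequentially. AE S in PiM {..<n} (\<lambda>_. \<mu>). \<forall>j. A n S j = Mean \<mu> j"
  shows "UME_learnable Q"
  unfolding UME_learnable_def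
proof (intro exI[of _ A] conjI allI ballI)
  fix \<mu> assume "\<mu> \<in> Q"
  have "\<forall>\<^sub>F n in sequentially.
      (\<integral>\<^sup>+ S. (SUP j. ennreal \<bar>A n S j - Mean \<mu> j\<bar>) \<partial>PiM {..<n} (\<lambda>_. \<mu>)) = 0"
    using exact[OF \<open>\<mu> \<in> Q\<close>]
  proof eventually_elim
    case (elim n)
    then have "AE S in PiM {..<n} (\<lambda>_. \<mu>). (SUP j. ennreal \<bar>A n S j - Mean \<mu> j\<bar>) = 0"
      by eventually_elim simp
    then show ?case
      by (simp add: nn_integral_cong_AE)
  qed
  then show "((\<lambda>n. \<integral>\<^sup>+ S. (SUP j. ennreal \<bar>A n S j - Mean \<mu> j\<bar>) \<partial>PiM {..<n} (\<lambda>_. \<mu>))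
      \<longlongrightarrow> 0) sequentially"
    by (rule tendsto_eventually)
qed (use assms in auto)

lemma prob_space_Prod: "prob_space (Prod q)"
  unfolding Prod_def by (intro prob_space_PiM prob_space_measure_pmf)

lemma Mean_Prod:
  assumes "\<And>j. q j \<in> {0..1}"
  shows "Mean (Prod q) j = q j"
proof -
  have "Mean (Prod q) j = (LINT x|Prod q. (\<lambda>b. if b then 1 else 0 :: real) (x j))"
    by (simp add: Mean_def)
  also have "\<dots> = (LINT b|distr (Prod q) (bernoulli_pmf (q j)) (\<lambda>x. x j). (if b then 1 else 0))"
    unfolding Prod_def by (rule integral_distr[symmetric]) (auto intro: measurable_component_singleton)
  also have "\<dots> = (LINT b|bernoulli_pmf (q j). (if b then 1 else 0))"
    unfolding Prod_def by (subst distr_PiM_component) (auto intro: prob_space_measure_pmf)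
  also have "\<dots> = q j"
    using assms by simp
  finally show ?thesis .
qed

lemma AE_Prod_component:
  assumes "AE b in bernoulli_pmf (q j). P b"
  shows "AE x in Prod q. P (x j)"
  unfolding Prod_def by (rule AE_PiM_component) (auto intro: prob_space_measure_pmf assms)

lemma AE_Prod_deterministic_component:
  assumes "q j \<in> {0, 1}"
  shows "AE x in Prod q. x j \<longleftrightarrow> q j = 1"
proof (rule AE_Prod_component)
  show "AE b in bernoulli_pmf (q j). b \<longleftrightarrow> q j = 1"
    unfolding AE_measure_pmf_iff
  proof
    fix b assume "b \<in> set_pmf (bernoulli_pmf (q j))"
    then show "b \<longleftrightarrow> q j = 1"
      using assms by (cases b) (auto simp: set_pmf_iff)
  qed
qed

definition round_mean :: "bool \<Rightarrow> nat \<Rightarrow> real" where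
  "round_mean b j = (if even j then (if b then 2/3 else 1/3) else of_bool b)"

definition round_estimator :: "nat \<Rightarrow> (nat \<Rightarrow> nat \<Rightarrow> bool) \<Rightarrow> nat \<Rightarrow> real" where
  "round_estimator n S j = (if n = 0 then 0 else round_mean (S 0 (2 * (j div 2) + 1)) j)"

lemma round_estimator_measurable:
  "round_estimator n \<in> measurable (PiM {..<n} (\<lambda>_. cube)) (PiM UNIV (\<lambda>_. borel))"
proof (rule measurable_PiM_single')
  fix j
  show "(\<lambda>S. round_estimator n S j) \<in> borel_measurable (PiM {..<n} (\<lambda>_. cube))"
  proof (cases "n = 0")
    case False
    have "(\<lambda>S. S 0) \<in> measurable (PiM {..<n} (\<lambda>_. cube)) cube"
      using False by (intro measurable_component_singleton) auto
    moreover have "(\<lambda>x. x (2 * (j div 2) + 1)) \<in> measurable cube (count_space UNIV)"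
      unfolding cube_def by (rule measurable_component_singleton) auto
    ultimately show ?thesis
      using False unfolding round_estimator_def by measurable
  qed (simp add: round_estimator_def)
qed (auto simp: space_PiM)

lemma round_estimator_range: "round_estimator n S j \<in> {0..1}"
  by (auto simp: round_estimator_def round_mean_def)

lemma AE_round_estimator_exact:
  assumes q: "\<And>k. q (2 * k) \<in> {1/3, 2/3} \<and> q (2 * k + 1) = (if q (2 * k) = 2/3 then 1 else 0)"
    and "n > 0"
  shows "AE S in PiM {..<n} (\<lambda>_. Prod q). \<forall>j. round_estimator n S j = q j"
proof (subst AE_all_countable, intro allI)
  fix j :: nat
  define k where "k = j div 2"
  have "AE x in Prod q. x (2 * k + 1) \<longleftrightarrow> q (2 * k + 1) = 1"
    using q[of k] by (intro AE_Prod_deterministic_component) simp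
  then have "AE x in Prod q. round_mean (x (2 * k + 1)) j = q j"
  proof eventually_elim
    case (elim x)
    have "j = 2 * k \<or> j = 2 * k + 1" "even j \<longleftrightarrow> j = 2 * k"
      unfolding k_def by presburger+
    then show ?case
      using elim q[of k] by (auto simp: round_mean_def)
  qed
  then have "AE S in PiM {..<n} (\<lambda>_. Prod q). round_mean (S 0 (2 * k + 1)) j = q j"
    using \<open>n > 0\<close> by (intro AE_PiM_component[where P = "\<lambda>x. round_mean (x (2 * k + 1)) j = q j"])
      (auto intro: prob_space_Prod)
  then show "AE S in PiM {..<n} (\<lambda>_. Prod q). round_estimator n S j = q j"
    using \<open>n > 0\<close> by (simp add: round_estimator_def k_def)
qed

theorem mainTheorem9:
  shows "UME_learnable Q_round"
proof (rule UME_learnable_if_eventually_AE_exact)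
  show "round_estimator n \<in> measurable (PiM {..<n} (\<lambda>_. cube)) (PiM UNIV (\<lambda>_. borel))" for n
    by (rule round_estimator_measurable)
  show "round_estimator n S j \<in> {0..1}" for n S j
    by (rule round_estimator_range)
next
  fix \<mu> assume "\<mu> \<in> Q_round"
  then obtain q where \<mu>: "\<mu> = Prod q" and q_range: "\<And>j. q j \<in> {0..1}"
    and round: "\<And>k. q (2 * k) \<in> {1/3, 2/3} \<and> q (2 * k + 1) = (if q (2 * k) = 2/3 then 1 else 0)"
    unfolding Q_round_def by blast
  show "\<forall>\<^sub>F n in sequentially. AE S in PiM {..<n} (\<lambda>_. \<mu>). \<forall>j. round_estimator n S j = Mean \<mu> j"
    unfolding \<mu> Mean_Prod[OF q_range]
    using eventually_gt_at_top[of 0] by eventually_elim (rule AE_round_estimator_exact[OF round])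
qed

end
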